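(* Let $X_1,X_2,X_3$ be Polish spaces and let $\mu_{12},\mu_{13},\mu_{23}$ be a consistent family of probability measures on $X_i\times X_j$, with common one-dimensional marginals $\mu_1,\mu_2,\mu_3$. If $\mu_{ij}\ge\frac23\,\mu_i\otimes\mu_j$ (as measures) for all $1\le i<j\le3$, then $\Pi(\mu_{12},\mu_{13},\mu_{23})$ is nonempty.
   Context: Consistency: any two of $\mu_{12},\mu_{13},\mu_{23}$ have the same marginal on their common coordinate; $\mu_i$ denotes this common marginal on $X_i$. $\Pi(\mu_{12},\mu_{13},\mu_{23})$ is the set of probability measures on $X_1\times X_2\times X_3$ whose projection onto $X_i\times X_j$ is $\mu_{ij}$ for all $i<j$. *)

theory Defs
  imports "HOL-Probability.Probability"
begin

end

theory Submission
  imports Defs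
begin

text \<open>
  By hypothesis \<open>\<lambda>\<^sub>i\<^sub>j = \<mu>\<^sub>i\<^sub>j - (2/3) \<mu>\<^sub>i \<otimes> \<mu>\<^sub>j\<close> is a nonnegative measure, and its
  marginals are \<open>(1/3) \<mu>\<^sub>i\<close> and \<open>(1/3) \<mu>\<^sub>j\<close>. Take
  \<open>\<nu> = \<lambda>\<^sub>1\<^sub>2 \<otimes> \<mu>\<^sub>3 + \<lambda>\<^sub>1\<^sub>3 \<otimes> \<mu>\<^sub>2 + \<lambda>\<^sub>2\<^sub>3 \<otimes> \<mu>\<^sub>1\<close>, each term with its coordinates
  rearranged into \<open>X\<^sub>1 \<times> X\<^sub>2 \<times> X\<^sub>3\<close>. Its \<open>(1,2)\<close>-marginal is
  \<open>\<lambda>\<^sub>1\<^sub>2 + (1/3) \<mu>\<^sub>1 \<otimes> \<mu>\<^sub>2 + \<mu>\<^sub>1 \<otimes> (1/3) \<mu>\<^sub>2 = \<mu>\<^sub>1\<^sub>2\<close>, and likewise for the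
  other two pairs; in particular \<open>\<nu>\<close> has mass one.
\<close>

definition add_measure :: "'a measure \<Rightarrow> 'a measure \<Rightarrow> 'a measure" where
  "add_measure M N = measure_of (space M) (sets M) (\<lambda>A. emeasure M A + emeasure N A)"

lemma
  shows space_add_measure [simp]: "space (add_measure M N) = space M"
    and sets_add_measure [simp]: "sets (add_measure M N) = sets M"
  by (auto simp: add_measure_def)

lemma emeasure_add_measure:
  assumes sets_eq: "sets N = sets M" and A: "A \<in> sets M"
  shows "emeasure (add_measure M N) A = emeasure M A + emeasure N A"
  unfolding add_measure_def
proof (rule emeasure_measure_of_sigma)
  show "sigma_algebra (space M) (sets M)" ..
  show "positive (sets M) (\<lambda>A. emeasure M A + emeasure N A)"
    by (simp add: positive_def sets_eq)
  show "countably_additive (sets M) (\<lambda>A. emeasure M A + emeasure N A)"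
  proof (rule countably_additiveI)
    fix A :: "nat \<Rightarrow> _" assume "range A \<subseteq> sets M" "disjoint_family A"
    then show "(\<Sum>i. emeasure M (A i) + emeasure N (A i)) =
        emeasure M (\<Union>i. A i) + emeasure N (\<Union>i. A i)"
      using sets_eq by (simp add: suminf_add[symmetric] suminf_emeasure)
  qed
qed fact

lemma add_measure_commute:
  assumes "sets N = sets M"
  shows "add_measure M N = add_measure N M"
  by (rule measure_eqI) (use assms in \<open>simp_all add: emeasure_add_measure add.commute\<close>)

lemma add_measure_assoc:
  assumes "sets N = sets M" "sets K = sets M"
  shows "add_measure (add_measure M N) K = add_measure M (add_measure N K)"
  by (rule measure_eqI) (use assms in \<open>simp_all add: emeasure_add_measure add.assoc\<close>)

lemma add_scale_measure:
  "add_measure (scale_measure r M) (scale_measure s M) = scale_measure (r + s) M"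
  by (rule measure_eqI) (simp_all add: emeasure_add_measure distrib_right)

lemma add_diff_measure:
  assumes "finite_measure M" "finite_measure N" "sets N = sets M"
    and "\<And>A. A \<in> sets M \<Longrightarrow> emeasure N A \<le> emeasure M A"
  shows "add_measure (diff_measure M N) N = M"
  by (rule measure_eqI)
     (use assms in \<open>simp_all add: emeasure_add_measure emeasure_diff_measure diff_add_cancel_ennreal\<close>)

lemma distr_add_measure:
  assumes f: "f \<in> measurable M K" and sets_eq: "sets N = sets M"
  shows "distr (add_measure M N) K f = add_measure (distr M K f) (distr N K f)"
proof (rule measure_eqI)
  fix A assume "A \<in> sets (distr (add_measure M N) K f)"
  then have A: "A \<in> sets K" by simp
  have fN: "f \<in> measurable N K" using f by (simp add: measurable_cong_sets[OF sets_eq refl])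
  have fMN: "f \<in> measurable (add_measure M N) K"
    using f by (simp add: measurable_cong_sets[OF sets_add_measure refl])
  have space_eq: "space N = space M" by (rule sets_eq_imp_space_eq[OF sets_eq])
  have "emeasure (distr (add_measure M N) K f) A = emeasure (add_measure M N) (f -` A \<inter> space M)"
    using emeasure_distr[OF fMN A] by simp
  also have "\<dots> = emeasure (distr M K f) A + emeasure (distr N K f) A"
    using measurable_sets[OF f A] by (simp add: emeasure_add_measure sets_eq space_eq emeasure_distr f fN A)
  also have "\<dots> = emeasure (add_measure (distr M K f) (distr N K f)) A"
    using A by (simp add: emeasure_add_measure)
  finally show "emeasure (distr (add_measure M N) K f) A = emeasure (add_measure (distr M K f) (distr N K f)) A" .
qed simp

lemma finite_measure_scale_measure:
  assumes "finite_measure M" "r \<noteq> \<top>"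
  shows "finite_measure (scale_measure r M)"
  using assms by (intro finite_measureI)
    (simp add: space_scale_measure ennreal_mult_eq_top_iff finite_measure.emeasure_finite)

lemma distr_scale_measure:
  assumes "f \<in> measurable M K"
  shows "distr (scale_measure r M) K f = scale_measure r (distr M K f)"
  by (rule measure_eqI) (use assms in \<open>simp_all add: emeasure_distr space_scale_measure\<close>)

lemma distr_diff_measure:
  assumes M: "finite_measure M" and N: "finite_measure N" and sets_eq: "sets N = sets M"
    and le: "\<And>A. A \<in> sets M \<Longrightarrow> emeasure N A \<le> emeasure M A"
    and f: "f \<in> measurable M K"
  shows "distr (diff_measure M N) K f = diff_measure (distr M K f) (distr N K f)"
proof (rule measure_eqI)
  fix A assume "A \<in> sets (distr (diff_measure M N) K f)"
  then have A: "A \<in> sets K" by simp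
  have fN: "f \<in> measurable N K" using f by (simp add: measurable_cong_sets[OF sets_eq refl])
  have fMN: "f \<in> measurable (diff_measure M N) K"
    using f by (simp add: measurable_cong_sets[OF sets_diff_measure refl])
  have space_eq: "space N = space M" by (rule sets_eq_imp_space_eq[OF sets_eq])
  have "emeasure (distr (diff_measure M N) K f) A = emeasure (diff_measure M N) (f -` A \<inter> space M)"
    using emeasure_distr[OF fMN A] by simp
  also have "\<dots> = emeasure (distr M K f) A - emeasure (distr N K f) A"
    using measurable_sets[OF f A]
    by (simp add: emeasure_diff_measure M N sets_eq le space_eq emeasure_distr f fN A)
  also have "\<dots> = emeasure (diff_measure (distr M K f) (distr N K f)) A"
  proof (rule emeasure_diff_measure[symmetric])
    show "finite_measure (distr M K f)" "finite_measure (distr N K f)"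
      by (simp_all add: finite_measure.finite_measure_distr M N f fN)
    show "emeasure (distr N K f) B \<le> emeasure (distr M K f) B" if "B \<in> sets (distr M K f)" for B
      using that le measurable_sets[OF f] by (simp add: emeasure_distr f fN space_eq)
  qed (use A in simp_all)
  finally show "emeasure (distr (diff_measure M N) K f) A = emeasure (diff_measure (distr M K f) (distr N K f)) A" .
qed simp

lemma diff_scale_measure:
  assumes M: "finite_measure M" and c: "c \<le> 1"
  shows "diff_measure M (scale_measure c M) = scale_measure (1 - c) M"
proof (rule measure_eqI)
  fix A assume "A \<in> sets (diff_measure M (scale_measure c M))"
  then have A: "A \<in> sets M" by simp
  have le: "c * emeasure M B \<le> emeasure M B" for B
    using mult_right_mono[OF c, of "emeasure M B"] by simp
  have "c \<noteq> \<top>" using c by (auto simp: top_unique)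
  then have "emeasure (diff_measure M (scale_measure c M)) A = emeasure M A - c * emeasure M A"
    using A le by (simp add: emeasure_diff_measure M finite_measure_scale_measure)
  also have "\<dots> = (1 - c) * emeasure M A"
    using ennreal_right_diff_distrib[of "emeasure M A" 1 c] finite_measure.emeasure_finite[OF M]
    by (simp add: mult.commute)
  finally show "emeasure (diff_measure M (scale_measure c M)) A = emeasure (scale_measure (1 - c) M) A"
    by simp
qed simp

lemma finite_measure_diff_measure:
  assumes "finite_measure M" "finite_measure N" "sets N = sets M"
    and "\<And>A. A \<in> sets M \<Longrightarrow> emeasure N A \<le> emeasure M A"
  shows "finite_measure (diff_measure M N)"
  using assms finite_measure.emeasure_finite[OF assms(1), of "space M"]
  by (intro finite_measureI) (simp add: emeasure_diff_measure ennreal_minus_eq_top)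

lemma distr_diff_scale_measure:
  assumes M: "finite_measure M" and P: "finite_measure P" and sets_eq: "sets P = sets M"
    and c: "c \<le> 1" and le: "\<And>A. A \<in> sets M \<Longrightarrow> c * emeasure P A \<le> emeasure M A"
    and f: "f \<in> measurable M K" and same_image: "distr P K f = distr M K f"
  shows "distr (diff_measure M (scale_measure c P)) K f = scale_measure (1 - c) (distr M K f)"
proof -
  have "c \<noteq> \<top>" using c by (auto simp: top_unique)
  then have cP: "finite_measure (scale_measure c P)" by (rule finite_measure_scale_measure[OF P])
  have fP: "f \<in> measurable P K" using f by (simp add: measurable_cong_sets[OF sets_eq refl])
  have "distr (diff_measure M (scale_measure c P)) K f = diff_measure (distr M K f) (distr (scale_measure c P) K f)"
    using le sets_eq by (intro distr_diff_measure[OF M cP _ _ f]) simp_all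
  also have "\<dots> = diff_measure (distr M K f) (scale_measure c (distr M K f))"
    by (simp add: distr_scale_measure[OF fP] same_image)
  also have "\<dots> = scale_measure (1 - c) (distr M K f)"
    by (rule diff_scale_measure[OF finite_measure.finite_measure_distr[OF M f] c])
  finally show ?thesis .
qed

lemma continuous_imp_borel_measurable:
  assumes "sets M = sets borel" "continuous_on UNIV f"
  shows "f \<in> borel_measurable M"
  using borel_measurable_continuous_onI[OF assms(2)] by (simp add: measurable_cong_sets[OF assms(1) refl])

lemma sets_pair_measure_borel:
  fixes M :: "'a::second_countable_topology measure" and N :: "'b::second_countable_topology measure"
  assumes "sets M = sets borel" "sets N = sets borel"
  shows "sets (M \<Otimes>\<^sub>M N) = sets borel"
  by (metis sets_pair_measure_cong[OF assms] borel_prod)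

lemma distr_add_measure_borel:
  assumes "sets M = sets borel" "sets N = sets borel" "continuous_on UNIV f"
  shows "distr (add_measure M N) borel f = add_measure (distr M borel f) (distr N borel f)"
  using assms by (simp add: distr_add_measure continuous_imp_borel_measurable)

lemma pair_scale_measure_left:
  assumes "finite_measure M" "finite_measure N" "r \<noteq> \<top>"
  shows "scale_measure r M \<Otimes>\<^sub>M N = scale_measure r (M \<Otimes>\<^sub>M N)"
proof (rule pair_measure_eqI)
  interpret N: finite_measure N by fact
  show "sigma_finite_measure (scale_measure r M)"
    using finite_measure_scale_measure[OF assms(1,3)] by (rule finite_measure.sigma_finite_measure)
  show "sigma_finite_measure N" ..
  show "sets (scale_measure r M \<Otimes>\<^sub>M N) = sets (scale_measure r (M \<Otimes>\<^sub>M N))"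
    by (simp add: sets_pair_measure_cong[of "scale_measure r M" M N N])
  fix A B assume "A \<in> sets (scale_measure r M)" "B \<in> sets N"
  then show "emeasure (scale_measure r M) A * emeasure N B = emeasure (scale_measure r (M \<Otimes>\<^sub>M N)) (A \<times> B)"
    by (simp add: N.emeasure_pair_measure_Times mult.assoc)
qed

lemma pair_scale_measure_right:
  assumes "finite_measure M" "finite_measure N" "r \<noteq> \<top>"
  shows "M \<Otimes>\<^sub>M scale_measure r N = scale_measure r (M \<Otimes>\<^sub>M N)"
proof (rule pair_measure_eqI)
  interpret M: finite_measure M by fact
  interpret N: finite_measure N by fact
  interpret rN: finite_measure "scale_measure r N"
    by (rule finite_measure_scale_measure[OF assms(2,3)])
  show "sigma_finite_measure M" "sigma_finite_measure (scale_measure r N)" ..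
  show "sets (M \<Otimes>\<^sub>M scale_measure r N) = sets (scale_measure r (M \<Otimes>\<^sub>M N))"
    by (simp add: sets_pair_measure_cong[of M M "scale_measure r N" N])
  fix A B assume "A \<in> sets M" "B \<in> sets (scale_measure r N)"
  then show "emeasure M A * emeasure (scale_measure r N) B = emeasure (scale_measure r (M \<Otimes>\<^sub>M N)) (A \<times> B)"
    by (simp add: rN.emeasure_pair_measure_Times N.emeasure_pair_measure_Times ac_simps)
qed

lemma (in prob_space) distr_pair_snd:
  assumes "sigma_finite_measure N"
  shows "distr (M \<Otimes>\<^sub>M N) N snd = N"
proof (intro measure_eqI)
  interpret N: sigma_finite_measure N by fact
  fix A assume A: "A \<in> sets (distr (M \<Otimes>\<^sub>M N) N snd)"
  from A have "emeasure (distr (M \<Otimes>\<^sub>M N) N snd) A = emeasure (M \<Otimes>\<^sub>M N) (space M \<times> A)"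
    by (auto simp add: emeasure_distr space_pair_measure dest: sets.sets_into_space intro!: arg_cong2[where f=emeasure])
  with A show "emeasure (distr (M \<Otimes>\<^sub>M N) N snd) A = emeasure N A"
    by (simp add: N.emeasure_pair_measure_Times emeasure_space_1)
qed simp

lemma distr_pair_measure_fst_borel:
  fixes L :: "'a::second_countable_topology measure" and N :: "'b::second_countable_topology measure"
  assumes "sets L = sets borel" "prob_space N"
  shows "distr (L \<Otimes>\<^sub>M N) borel fst = L"
  using prob_space.distr_pair_fst[OF assms(2), of L] distr_cong[OF refl assms(1) refl, of "L \<Otimes>\<^sub>M N" fst]
  by simp

lemma distr_pair_measure_snd_borel:
  fixes M :: "'a::second_countable_topology measure" and N :: "'b::second_countable_topology measure"
  assumes "prob_space M" "sets N = sets borel" "sigma_finite_measure N"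
  shows "distr (M \<Otimes>\<^sub>M N) borel snd = N"
  using prob_space.distr_pair_snd[OF assms(1,3)] distr_cong[OF refl assms(2) refl, of "M \<Otimes>\<^sub>M N" snd]
  by simp

lemma distr_pair_measure_map_left:
  fixes f :: "'a \<Rightarrow> 'b::second_countable_topology" and N :: "'c::second_countable_topology measure"
  assumes f: "f \<in> borel_measurable L" and N: "sets N = sets borel" "sigma_finite_measure N"
  shows "distr (L \<Otimes>\<^sub>M N) borel (\<lambda>(p, z). (f p, z)) = distr L borel f \<Otimes>\<^sub>M N"
proof -
  have id: "distr N borel (\<lambda>z. z) = N" by (rule distr_id2[OF N(1)[symmetric]])
  have "distr L borel f \<Otimes>\<^sub>M distr N borel (\<lambda>z. z) =
      distr (L \<Otimes>\<^sub>M N) (borel \<Otimes>\<^sub>M borel) (\<lambda>(p, z). (f p, z))"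
    using pair_measure_distr[OF f measurable_ident_sets[OF N(1)]] N(2) by (simp add: id)
  then show ?thesis by (simp add: id borel_prod)
qed

lemma distr_pair_measure_map_right:
  fixes f :: "'a \<Rightarrow> 'b::second_countable_topology" and N :: "'c::second_countable_topology measure"
  assumes f: "f \<in> borel_measurable L" and N: "sets N = sets borel" "sigma_finite_measure N"
    and D: "sigma_finite_measure (distr L borel f)"
  shows "distr (L \<Otimes>\<^sub>M N) borel (\<lambda>(p, z). (z, f p)) = N \<Otimes>\<^sub>M distr L borel f"
proof -
  interpret pair_sigma_finite N "distr L borel f" using N(2) D by (rule pair_sigma_finite.intro)
  have g: "(\<lambda>(p, z). (f p, z)) \<in> measurable (L \<Otimes>\<^sub>M N) borel"
    unfolding borel_prod[symmetric] using f measurable_ident_sets[OF N(1)] by (simp add: split_beta') measurable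
  have swap: "(\<lambda>(x, y). (y, x)) \<in> measurable borel (N \<Otimes>\<^sub>M distr L borel f)"
    by (simp add: measurable_cong_sets[OF refl sets_pair_measure_cong[OF N(1) sets_distr]] borel_prod[symmetric])
  have "N \<Otimes>\<^sub>M distr L borel f =
      distr (distr (L \<Otimes>\<^sub>M N) borel (\<lambda>(p, z). (f p, z))) (N \<Otimes>\<^sub>M distr L borel f) (\<lambda>(x, y). (y, x))"
    unfolding distr_pair_measure_map_left[OF f N] by (rule distr_pair_swap)
  also have "\<dots> = distr (L \<Otimes>\<^sub>M N) (N \<Otimes>\<^sub>M distr L borel f) ((\<lambda>(x, y). (y, x)) \<circ> (\<lambda>(p, z). (f p, z)))"
    by (rule distr_distr[OF swap g])
  also have "\<dots> = distr (L \<Otimes>\<^sub>M N) borel (\<lambda>(p, z). (z, f p))"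
    by (rule distr_cong) (auto simp: sets_pair_measure_borel[OF N(1)])
  finally show ?thesis ..
qed

lemma distr_distr_continuous:
  assumes "sets M = sets borel" "continuous_on UNIV f" "continuous_on UNIV g" "\<And>x. g (f x) = h x"
  shows "distr (distr M borel f) borel g = distr M borel h"
proof -
  have "distr (distr M borel f) borel g = distr M borel (g \<circ> f)"
    using assms(1-3) by (intro distr_distr) (simp_all add: continuous_imp_borel_measurable)
  then show ?thesis using assms(4) by (simp add: comp_def)
qed

lemma distr_distr_pair_measure_fst:
  fixes L :: "'a::second_countable_topology measure" and N :: "'b::second_countable_topology measure"
    and g :: "'a \<times> 'b \<Rightarrow> 'c::topological_space"
  assumes "sets L = sets borel" "sets N = sets borel" "prob_space N"
    and "continuous_on UNIV g" "continuous_on UNIV \<pi>" "\<And>p z. \<pi> (g (p, z)) = p"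
  shows "distr (distr (L \<Otimes>\<^sub>M N) borel g) borel \<pi> = L"
proof -
  have "distr (distr (L \<Otimes>\<^sub>M N) borel g) borel \<pi> = distr (L \<Otimes>\<^sub>M N) borel fst"
    by (rule distr_distr_continuous) (use assms in \<open>auto simp: sets_pair_measure_borel split_paired_all\<close>)
  then show ?thesis using assms(1,3) by (simp add: distr_pair_measure_fst_borel)
qed

lemma distr_distr_pair_measure_map_left:
  fixes L :: "'a::second_countable_topology measure" and N :: "'b::second_countable_topology measure"
    and g :: "'a \<times> 'b \<Rightarrow> 'c::topological_space" and f :: "'a \<Rightarrow> 'd::second_countable_topology"
  assumes "sets L = sets borel" "sets N = sets borel" "prob_space N"
    and "continuous_on UNIV g" "continuous_on UNIV \<pi>" "continuous_on UNIV f"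
    and "\<And>p z. \<pi> (g (p, z)) = (f p, z)"
  shows "distr (distr (L \<Otimes>\<^sub>M N) borel g) borel \<pi> = distr L borel f \<Otimes>\<^sub>M N"
proof -
  have "distr (distr (L \<Otimes>\<^sub>M N) borel g) borel \<pi> = distr (L \<Otimes>\<^sub>M N) borel (\<lambda>(p, z). (f p, z))"
    by (rule distr_distr_continuous) (use assms in \<open>auto simp: sets_pair_measure_borel split_paired_all\<close>)
  then show ?thesis
    using assms by (simp add: distr_pair_measure_map_left continuous_imp_borel_measurable prob_space_imp_sigma_finite)
qed

lemma distr_distr_pair_measure_map_right:
  fixes L :: "'a::second_countable_topology measure" and N :: "'b::second_countable_topology measure"
    and g :: "'a \<times> 'b \<Rightarrow> 'c::topological_space" and f :: "'a \<Rightarrow> 'd::second_countable_topology"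
  assumes "sets L = sets borel" "finite_measure L" "sets N = sets borel" "prob_space N"
    and "continuous_on UNIV g" "continuous_on UNIV \<pi>" "continuous_on UNIV f"
    and "\<And>p z. \<pi> (g (p, z)) = (z, f p)"
  shows "distr (distr (L \<Otimes>\<^sub>M N) borel g) borel \<pi> = N \<Otimes>\<^sub>M distr L borel f"
proof -
  have f: "f \<in> borel_measurable L" using assms(1,7) by (rule continuous_imp_borel_measurable)
  have "sigma_finite_measure (distr L borel f)"
    using finite_measure.finite_measure_distr[OF assms(2) f] by (rule finite_measure.sigma_finite_measure)
  moreover have "distr (distr (L \<Otimes>\<^sub>M N) borel g) borel \<pi> = distr (L \<Otimes>\<^sub>M N) borel (\<lambda>(p, z). (z, f p))"
    by (rule distr_distr_continuous) (use assms in \<open>auto simp: sets_pair_measure_borel split_paired_all\<close>)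
  ultimately show ?thesis
    using assms by (simp add: distr_pair_measure_map_right[OF f] prob_space_imp_sigma_finite)
qed

lemma prob_space_distr_fst_snd:
  fixes \<mu> :: "('a::second_countable_topology \<times> 'b::second_countable_topology) measure"
  assumes "sets \<mu> = sets borel" "prob_space \<mu>"
  shows "prob_space (distr \<mu> borel fst)" "prob_space (distr \<mu> borel snd)"
  using assms by (simp_all add: prob_space.prob_space_distr continuous_imp_borel_measurable continuous_intros)

lemma diff_scale_pair_measure:
  fixes \<mu> :: "('a::second_countable_topology \<times> 'b::second_countable_topology) measure"
  assumes sets: "sets \<mu> = sets borel" and prob: "prob_space \<mu>"
    and marg: "distr \<mu> borel fst = \<mu>a" "distr \<mu> borel snd = \<mu>b"
    and c: "c \<le> 1" and le: "\<forall>A\<in>sets borel. c * emeasure (\<mu>a \<Otimes>\<^sub>M \<mu>b) A \<le> emeasure \<mu> A"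
  defines "L \<equiv> diff_measure \<mu> (scale_measure c (\<mu>a \<Otimes>\<^sub>M \<mu>b))"
  shows "finite_measure L"
    and "distr L borel fst = scale_measure (1 - c) \<mu>a"
    and "distr L borel snd = scale_measure (1 - c) \<mu>b"
proof -
  interpret \<mu>: prob_space \<mu> by fact
  interpret \<mu>a: prob_space \<mu>a using prob_space_distr_fst_snd(1)[OF sets prob] marg(1) by simp
  interpret \<mu>b: prob_space \<mu>b using prob_space_distr_fst_snd(2)[OF sets prob] marg(2) by simp
  interpret P: pair_prob_space \<mu>a \<mu>b ..
  have sets_ab: "sets \<mu>a = sets borel" "sets \<mu>b = sets borel" using marg by auto
  have sets_P: "sets (\<mu>a \<Otimes>\<^sub>M \<mu>b) = sets \<mu>" using sets_ab sets by (simp add: sets_pair_measure_borel)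
  have le': "c * emeasure (\<mu>a \<Otimes>\<^sub>M \<mu>b) A \<le> emeasure \<mu> A" if "A \<in> sets \<mu>" for A
    using le that sets by simp
  note excess = \<mu>.finite_measure_axioms P.finite_measure_axioms sets_P c le'
  have "c \<noteq> \<top>" using c by (auto simp: top_unique)
  then show "finite_measure L"
    unfolding L_def using sets_P le'
    by (intro finite_measure_diff_measure) (simp_all add: finite_measure_scale_measure P.finite_measure_axioms)
  show "distr L borel fst = scale_measure (1 - c) \<mu>a"
    unfolding L_def using sets sets_ab marg(1)
    by (subst distr_diff_scale_measure[OF excess]) (simp_all add: continuous_imp_borel_measurable
        continuous_intros distr_pair_measure_fst_borel \<mu>b.prob_space_axioms)
  show "distr L borel snd = scale_measure (1 - c) \<mu>b"
    unfolding L_def using sets sets_ab marg(2)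
    by (subst distr_diff_scale_measure[OF excess]) (simp_all add: continuous_imp_borel_measurable
        continuous_intros distr_pair_measure_snd_borel \<mu>a.prob_space_axioms \<mu>b.sigma_finite_measure_axioms)
qed

lemma add_diff_scale_pair_measure:
  fixes \<mu> :: "('a::second_countable_topology \<times> 'b::second_countable_topology) measure"
  assumes sets: "sets \<mu> = sets borel" "sets \<mu>a = sets borel" "sets \<mu>b = sets borel"
    and "prob_space \<mu>" "prob_space \<mu>a" "prob_space \<mu>b"
    and c: "c \<le> 1" "(1 - c) + (1 - c) = c"
    and le: "\<forall>A\<in>sets borel. c * emeasure (\<mu>a \<Otimes>\<^sub>M \<mu>b) A \<le> emeasure \<mu> A"
  shows "add_measure (add_measure (diff_measure \<mu> (scale_measure c (\<mu>a \<Otimes>\<^sub>M \<mu>b)))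
      (scale_measure (1 - c) \<mu>a \<Otimes>\<^sub>M \<mu>b)) (\<mu>a \<Otimes>\<^sub>M scale_measure (1 - c) \<mu>b) = \<mu>"
proof -
  interpret \<mu>: prob_space \<mu> by fact
  interpret \<mu>a: prob_space \<mu>a by fact
  interpret \<mu>b: prob_space \<mu>b by fact
  interpret pair_prob_space \<mu>a \<mu>b ..
  let ?P = "\<mu>a \<Otimes>\<^sub>M \<mu>b"
  have sets_P: "sets ?P = sets borel" using sets by (simp add: sets_pair_measure_borel)
  have "c \<noteq> \<top>" using c by (auto simp: top_unique)
  then have "add_measure (diff_measure \<mu> (scale_measure c ?P)) (scale_measure c ?P) = \<mu>"
    using le sets sets_P
    by (intro add_diff_measure) (simp_all add: \<mu>.finite_measure_axioms finite_measure_scale_measure finite_measure_axioms)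
  moreover have "scale_measure (1 - c) \<mu>a \<Otimes>\<^sub>M \<mu>b = scale_measure (1 - c) ?P"
      "\<mu>a \<Otimes>\<^sub>M scale_measure (1 - c) \<mu>b = scale_measure (1 - c) ?P"
    by (simp_all add: pair_scale_measure_left pair_scale_measure_right \<mu>a.finite_measure_axioms
        \<mu>b.finite_measure_axioms ennreal_minus_eq_top)
  ultimately show ?thesis
    using sets sets_P by (simp add: add_measure_assoc add_scale_measure c(2))
qed

definition glue_measure ::
    "('a::topological_space \<times> 'b::topological_space) measure \<Rightarrow>
     ('a \<times> 'c::topological_space) measure \<Rightarrow> ('b \<times> 'c) measure \<Rightarrow>
     'a measure \<Rightarrow> 'b measure \<Rightarrow> 'c measure \<Rightarrow> ('a \<times> 'b \<times> 'c) measure"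
  where "glue_measure L12 L13 L23 \<mu>1 \<mu>2 \<mu>3 =
    add_measure
      (add_measure
        (distr (L12 \<Otimes>\<^sub>M \<mu>3) borel (\<lambda>((x, y), z). (x, y, z)))
        (distr (L13 \<Otimes>\<^sub>M \<mu>2) borel (\<lambda>((x, z), y). (x, y, z))))
      (distr (L23 \<Otimes>\<^sub>M \<mu>1) borel (\<lambda>((y, z), x). (x, y, z)))"

lemma sets_glue_measure [simp]: "sets (glue_measure L12 L13 L23 \<mu>1 \<mu>2 \<mu>3) = sets borel"
  by (simp add: glue_measure_def)

context
  fixes L12 :: "('a::second_countable_topology \<times> 'b::second_countable_topology) measure"
    and L13 :: "('a \<times> 'c::second_countable_topology) measure" and L23 :: "('b \<times> 'c) measure"
    and \<mu>1 :: "'a measure" and \<mu>2 :: "'b measure" and \<mu>3 :: "'c measure"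
  assumes L: "sets L12 = sets borel" "sets L13 = sets borel" "sets L23 = sets borel"
      "finite_measure L12" "finite_measure L13" "finite_measure L23"
    and \<mu>: "sets \<mu>1 = sets borel" "sets \<mu>2 = sets borel" "sets \<mu>3 = sets borel"
      "prob_space \<mu>1" "prob_space \<mu>2" "prob_space \<mu>3"
begin

lemma distr_glue_measure_eq:
  assumes "continuous_on UNIV \<pi>"
  shows "distr (glue_measure L12 L13 L23 \<mu>1 \<mu>2 \<mu>3) borel \<pi> =
    add_measure
      (add_measure
        (distr (distr (L12 \<Otimes>\<^sub>M \<mu>3) borel (\<lambda>((x, y), z). (x, y, z))) borel \<pi>)
        (distr (distr (L13 \<Otimes>\<^sub>M \<mu>2) borel (\<lambda>((x, z), y). (x, y, z))) borel \<pi>))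
      (distr (distr (L23 \<Otimes>\<^sub>M \<mu>1) borel (\<lambda>((y, z), x). (x, y, z))) borel \<pi>)"
  unfolding glue_measure_def using assms by (simp add: distr_add_measure_borel)

lemma distr_glue_measure_12:
  "distr (glue_measure L12 L13 L23 \<mu>1 \<mu>2 \<mu>3) borel (\<lambda>(x, y, z). (x, y)) =
    add_measure (add_measure L12 (distr L13 borel fst \<Otimes>\<^sub>M \<mu>2)) (\<mu>1 \<Otimes>\<^sub>M distr L23 borel fst)"
proof -
  have "distr (distr (L12 \<Otimes>\<^sub>M \<mu>3) borel (\<lambda>((x, y), z). (x, y, z))) borel (\<lambda>(x, y, z). (x, y)) = L12"
    by (rule distr_distr_pair_measure_fst) (use L \<mu> in \<open>auto simp: split_beta' intro!: continuous_intros\<close>)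
  moreover have "distr (distr (L13 \<Otimes>\<^sub>M \<mu>2) borel (\<lambda>((x, z), y). (x, y, z))) borel (\<lambda>(x, y, z). (x, y)) =
      distr L13 borel fst \<Otimes>\<^sub>M \<mu>2"
    by (rule distr_distr_pair_measure_map_left) (use L \<mu> in \<open>auto simp: split_beta' intro!: continuous_intros\<close>)
  moreover have "distr (distr (L23 \<Otimes>\<^sub>M \<mu>1) borel (\<lambda>((y, z), x). (x, y, z))) borel (\<lambda>(x, y, z). (x, y)) =
      \<mu>1 \<Otimes>\<^sub>M distr L23 borel fst"
    by (rule distr_distr_pair_measure_map_right) (use L \<mu> in \<open>auto simp: split_beta' intro!: continuous_intros\<close>)
  ultimately show ?thesis
    by (simp add: distr_glue_measure_eq split_beta' continuous_intros)
qed

lemma distr_glue_measure_13: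
  "distr (glue_measure L12 L13 L23 \<mu>1 \<mu>2 \<mu>3) borel (\<lambda>(x, y, z). (x, z)) =
    add_measure (add_measure L13 (distr L12 borel fst \<Otimes>\<^sub>M \<mu>3)) (\<mu>1 \<Otimes>\<^sub>M distr L23 borel snd)"
proof -
  have "distr (distr (L12 \<Otimes>\<^sub>M \<mu>3) borel (\<lambda>((x, y), z). (x, y, z))) borel (\<lambda>(x, y, z). (x, z)) =
      distr L12 borel fst \<Otimes>\<^sub>M \<mu>3"
    by (rule distr_distr_pair_measure_map_left) (use L \<mu> in \<open>auto simp: split_beta' intro!: continuous_intros\<close>)
  moreover have "distr (distr (L13 \<Otimes>\<^sub>M \<mu>2) borel (\<lambda>((x, z), y). (x, y, z))) borel (\<lambda>(x, y, z). (x, z)) = L13"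
    by (rule distr_distr_pair_measure_fst) (use L \<mu> in \<open>auto simp: split_beta' intro!: continuous_intros\<close>)
  moreover have "distr (distr (L23 \<Otimes>\<^sub>M \<mu>1) borel (\<lambda>((y, z), x). (x, y, z))) borel (\<lambda>(x, y, z). (x, z)) =
      \<mu>1 \<Otimes>\<^sub>M distr L23 borel snd"
    by (rule distr_distr_pair_measure_map_right) (use L \<mu> in \<open>auto simp: split_beta' intro!: continuous_intros\<close>)
  ultimately show ?thesis
    using L \<mu> by (simp add: distr_glue_measure_eq split_beta' continuous_intros
        add_measure_commute[of _ L13] sets_pair_measure_borel)
qed

lemma distr_glue_measure_23:
  "distr (glue_measure L12 L13 L23 \<mu>1 \<mu>2 \<mu>3) borel (\<lambda>(x, y, z). (y, z)) =
    add_measure (add_measure L23 (distr L12 borel snd \<Otimes>\<^sub>M \<mu>3)) (\<mu>2 \<Otimes>\<^sub>M distr L13 borel snd)"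
proof -
  have "distr (distr (L12 \<Otimes>\<^sub>M \<mu>3) borel (\<lambda>((x, y), z). (x, y, z))) borel (\<lambda>(x, y, z). (y, z)) =
      distr L12 borel snd \<Otimes>\<^sub>M \<mu>3"
    by (rule distr_distr_pair_measure_map_left) (use L \<mu> in \<open>auto simp: split_beta' intro!: continuous_intros\<close>)
  moreover have "distr (distr (L13 \<Otimes>\<^sub>M \<mu>2) borel (\<lambda>((x, z), y). (x, y, z))) borel (\<lambda>(x, y, z). (y, z)) =
      \<mu>2 \<Otimes>\<^sub>M distr L13 borel snd"
    by (rule distr_distr_pair_measure_map_right) (use L \<mu> in \<open>auto simp: split_beta' intro!: continuous_intros\<close>)
  moreover have "distr (distr (L23 \<Otimes>\<^sub>M \<mu>1) borel (\<lambda>((y, z), x). (x, y, z))) borel (\<lambda>(x, y, z). (y, z)) = L23"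
    by (rule distr_distr_pair_measure_fst) (use L \<mu> in \<open>auto simp: split_beta' intro!: continuous_intros\<close>)
  ultimately have "distr (glue_measure L12 L13 L23 \<mu>1 \<mu>2 \<mu>3) borel (\<lambda>(x, y, z). (y, z)) =
      add_measure (add_measure (distr L12 borel snd \<Otimes>\<^sub>M \<mu>3) (\<mu>2 \<Otimes>\<^sub>M distr L13 borel snd)) L23"
    by (simp add: distr_glue_measure_eq split_beta' continuous_intros)
  also have "\<dots> = add_measure (add_measure L23 (distr L12 borel snd \<Otimes>\<^sub>M \<mu>3)) (\<mu>2 \<Otimes>\<^sub>M distr L13 borel snd)"
    by (rule measure_eqI) (use L \<mu> in \<open>simp_all add: emeasure_add_measure sets_pair_measure_borel ac_simps\<close>)
  finally show ?thesis .
qed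

end

theorem mainTheorem6:
  fixes \<mu>12 :: "('a::polish_space \<times> 'b::polish_space) measure"
    and \<mu>13 :: "('a \<times> 'c::polish_space) measure"
    and \<mu>23 :: "('b \<times> 'c) measure"
    and \<mu>1 :: "'a measure" and \<mu>2 :: "'b measure" and \<mu>3 :: "'c measure"
  assumes sets12: "sets \<mu>12 = sets borel" and prob12: "prob_space \<mu>12"
    and sets13: "sets \<mu>13 = sets borel" and prob13: "prob_space \<mu>13"
    and sets23: "sets \<mu>23 = sets borel" and prob23: "prob_space \<mu>23"
    and marg1_12: "distr \<mu>12 borel fst = \<mu>1" and marg1_13: "distr \<mu>13 borel fst = \<mu>1"
    and marg2_12: "distr \<mu>12 borel snd = \<mu>2" and marg2_23: "distr \<mu>23 borel fst = \<mu>2"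
    and marg3_13: "distr \<mu>13 borel snd = \<mu>3" and marg3_23: "distr \<mu>23 borel snd = \<mu>3"
    and ge12: "\<forall>A \<in> sets borel. ennreal (2/3) * emeasure (\<mu>1 \<Otimes>\<^sub>M \<mu>2) A \<le> emeasure \<mu>12 A"
    and ge13: "\<forall>A \<in> sets borel. ennreal (2/3) * emeasure (\<mu>1 \<Otimes>\<^sub>M \<mu>3) A \<le> emeasure \<mu>13 A"
    and ge23: "\<forall>A \<in> sets borel. ennreal (2/3) * emeasure (\<mu>2 \<Otimes>\<^sub>M \<mu>3) A \<le> emeasure \<mu>23 A"
  shows "\<exists>\<nu> :: ('a \<times> 'b \<times> 'c) measure.
           sets \<nu> = sets borel \<and> prob_space \<nu> \<and>
           distr \<nu> borel (\<lambda>(x, y, z). (x, y)) = \<mu>12 \<and>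
           distr \<nu> borel (\<lambda>(x, y, z). (x, z)) = \<mu>13 \<and>
           distr \<nu> borel (\<lambda>(x, y, z). (y, z)) = \<mu>23"
proof -
  \<comment> \<open>the only properties of the constant \<open>2/3\<close> that are used\<close>
  have c: "ennreal (2/3) \<le> 1" "(1 - ennreal (2/3)) + (1 - ennreal (2/3)) = ennreal (2/3)"
    using ennreal_minus[of "2/3" 1] by (simp_all add: ennreal_plus[symmetric] del: ennreal_plus)
  define L12 where "L12 = diff_measure \<mu>12 (scale_measure (ennreal (2/3)) (\<mu>1 \<Otimes>\<^sub>M \<mu>2))"
  define L13 where "L13 = diff_measure \<mu>13 (scale_measure (ennreal (2/3)) (\<mu>1 \<Otimes>\<^sub>M \<mu>3))"
  define L23 where "L23 = diff_measure \<mu>23 (scale_measure (ennreal (2/3)) (\<mu>2 \<Otimes>\<^sub>M \<mu>3))"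
  note L12 = diff_scale_pair_measure[OF sets12 prob12 marg1_12 marg2_12 c(1) ge12, folded L12_def]
  note L13 = diff_scale_pair_measure[OF sets13 prob13 marg1_13 marg3_13 c(1) ge13, folded L13_def]
  note L23 = diff_scale_pair_measure[OF sets23 prob23 marg2_23 marg3_23 c(1) ge23, folded L23_def]
  have sets_L: "sets L12 = sets borel" "sets L13 = sets borel" "sets L23 = sets borel"
    by (simp_all add: L12_def L13_def L23_def sets12 sets13 sets23)
  have sets: "sets \<mu>1 = sets borel" "sets \<mu>2 = sets borel" "sets \<mu>3 = sets borel"
    using marg1_12 marg2_12 marg3_13 by auto
  have prob: "prob_space \<mu>1" "prob_space \<mu>2" "prob_space \<mu>3"
    using prob_space_distr_fst_snd[OF sets12 prob12] prob_space_distr_fst_snd[OF sets13 prob13]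
      marg1_12 marg2_12 marg3_13 by simp_all
  define \<nu> where "\<nu> = glue_measure L12 L13 L23 \<mu>1 \<mu>2 \<mu>3"
  note glue_assms = sets_L L12(1) L13(1) L23(1) sets prob
  have marg12: "distr \<nu> borel (\<lambda>(x, y, z). (x, y)) = \<mu>12"
    unfolding \<nu>_def distr_glue_measure_12[OF glue_assms] L13(2) L23(2)
    by (rule add_diff_scale_pair_measure[OF sets12 sets(1,2) prob12 prob(1,2) c ge12, folded L12_def])
  have marg13: "distr \<nu> borel (\<lambda>(x, y, z). (x, z)) = \<mu>13"
    unfolding \<nu>_def distr_glue_measure_13[OF glue_assms] L12(2) L23(3)
    by (rule add_diff_scale_pair_measure[OF sets13 sets(1,3) prob13 prob(1,3) c ge13, folded L13_def])
  have marg23: "distr \<nu> borel (\<lambda>(x, y, z). (y, z)) = \<mu>23"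
    unfolding \<nu>_def distr_glue_measure_23[OF glue_assms] L12(3) L13(3)
    by (rule add_diff_scale_pair_measure[OF sets23 sets(2,3) prob23 prob(2,3) c ge23, folded L23_def])
  have "prob_space \<nu>"
  proof (rule prob_space_distrD)
    show "(\<lambda>(x, y, z). (x, y)) \<in> borel_measurable \<nu>"
      by (simp add: \<nu>_def continuous_imp_borel_measurable split_beta' continuous_intros)
    show "prob_space (distr \<nu> borel (\<lambda>(x, y, z). (x, y)))" unfolding marg12 by (fact prob12)
  qed
  moreover have "sets \<nu> = sets borel" by (simp add: \<nu>_def)
  ultimately show ?thesis using marg12 marg13 marg23 by blast
qed

end
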